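(* Let $d \ge 1$ and let $T^{(1)}$ be a one-layer Transformer as described in the context, with Lipschitz MLP $\psi:\mathbb{R}^d\to\mathbb{R}^d$ and attention scores satisfying the uniform bounded-difference condition with constant $\delta$. Fix $k \ge 0$, prefix vectors $\mathbf{v}_1,\dots,\mathbf{v}_k \in \mathbb{R}^d$ and a vector $\mathbf{v}\in\mathbb{R}^d$ (all taken from a finite vocabulary of token vectors). For $n \ge 1$ let $S_n = (\mathbf{v}_1,\dots,\mathbf{v}_k,\underbrace{\mathbf{v},\dots,\mathbf{v}}_{n \text{ times}})$, a sequence of length $n+k$, and let $S^* = (\mathbf{v})$ be the sequence of length one. Then $$\lim_{n\to\infty}\left\lVert T^{(1)}(S_n)_{n+k} - T^{(1)}(S^* )_1\right\rVert = 0.$$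
   Context: Model. Tokens are represented by vectors in $\mathbb{R}^d$ drawn from a finite vocabulary. A (decoder, causally masked) Transformer layer $T^{(\ell)}$ maps an input sequence $S=(\mathbf{v}_1,\dots,\mathbf{v}_m)$ to the output sequence $T^{(\ell)}(S)=(\mathbf{v}'_1,\dots,\mathbf{v}'_m)$ given by $$\mathbf{z}_i = \sum_{j\le i}\alpha_{i,j}\mathbf{v}_j + \mathbf{v}_i,\qquad \mathbf{v}'_i = \psi(\mathbf{z}_i)+\mathbf{z}_i,$$ where $\psi:\mathbb{R}^d\to\mathbb{R}^d$ is an MLP assumed Lipschitz continuous, and the attention coefficients are $\alpha_{i,j} = \exp(s_{i,j})/\sum_{j'\le i}\exp(s_{i,j'})$ for $j\le i$, with scores $s_{i,j}$ computed from queries and keys of tokens $i$ and $j$ (possibly with a bounded positional encoding, such as RoPE, acting only on queries and keys). Standing assumption: there is a constant $\delta$, independent of the sequence and its length, such that $|s_{i,j}-s_{i,j'}|\le\delta$ for all $i$ and all $j,j'\le i$; consequently $\alpha_{i,j}\le e^{\delta}/i$. $T^{(\ell)}(S)_i$ denotes the $i$-th element of the output sequence, and $\lVert\cdot\rVert$ is the Euclidean norm. *)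

theory Defs
  imports "HOL-Analysis.Analysis"
begin

text \<open>Sequences of tokens are lists; positions are 1-indexed, S i = S ! (i-1).
  The attention score at query position i and key position j is
  sc (token at i) (token at j) i j : it is computed from the two tokens
  (queries/keys) and may depend on the positions (positional encoding).\<close>

definition tok :: "'a list \<Rightarrow> nat \<Rightarrow> 'a" where
  "tok S i = S ! (i - 1)"

definition attn_coef ::
  "('a \<Rightarrow> 'a \<Rightarrow> nat \<Rightarrow> nat \<Rightarrow> real) \<Rightarrow> 'a list \<Rightarrow> nat \<Rightarrow> nat \<Rightarrow> real" where
  "attn_coef sc S i j =
     exp (sc (tok S i) (tok S j) i j) / (\<Sum>j'=1..i. exp (sc (tok S i) (tok S j') i j'))"

definition layer_out ::
  "(real^'d \<Rightarrow> real^'d) \<Rightarrow> (real^'d \<Rightarrow> real^'d \<Rightarrow> nat \<Rightarrow> nat \<Rightarrow> real)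
    \<Rightarrow> (real^'d) list \<Rightarrow> nat \<Rightarrow> real^'d" where
  "layer_out psi sc S i =
     (let z = (\<Sum>j=1..i. attn_coef sc S i j *\<^sub>R tok S j) + tok S i in psi z + z)"

end

theory Submission
  imports Defs
begin

text \<open>Under the bounded score differences every attention weight at position \<open>m\<close> is at most
  \<open>e\<^sup>\<delta>/m\<close>. In \<open>S\<^sub>n\<close> all but the first \<open>k\<close> tokens equal \<open>v\<close>, so the attention average differs
  from \<open>v\<close> by at most \<open>e\<^sup>\<delta>/(n+k)\<close> times the fixed quantity \<open>\<Sum>\<^sub>j\<^sub>\<le>\<^sub>k \<parallel>v\<^sub>j - v\<parallel>\<close>. Hence the
  residual input \<open>z\<close> of the MLP tends to \<open>2v\<close>, which is exactly the input at the single position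
  of \<open>S\<^sup>*\<close>, and the Lipschitz MLP transports this convergence to the output.\<close>

definition attn_sum ::
  "('a \<Rightarrow> 'a \<Rightarrow> nat \<Rightarrow> nat \<Rightarrow> real) \<Rightarrow> ('a::real_vector) list \<Rightarrow> nat \<Rightarrow> 'a" where
  "attn_sum sc S i = (\<Sum>j=1..i. attn_coef sc S i j *\<^sub>R tok S j)"

lemma layer_out_eq_attn_sum:
  "layer_out psi sc S i = psi (attn_sum sc S i + tok S i) + (attn_sum sc S i + tok S i)"
  by (simp add: layer_out_def attn_sum_def Let_def)

lemma layer_out_singleton: "layer_out psi sc [v] 1 = psi (v + v) + (v + v)"
  by (simp add: layer_out_def attn_coef_def tok_def Let_def)

lemma attn_coef_nonneg: "0 \<le> attn_coef sc S i j"
  unfolding attn_coef_def by (intro divide_nonneg_nonneg sum_nonneg) auto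

lemma sum_attn_coef:
  assumes "1 \<le> i"
  shows "(\<Sum>j=1..i. attn_coef sc S i j) = 1"
proof -
  have "(\<Sum>j'=1..i. exp (sc (tok S i) (tok S j') i j')) > 0"
    using assms by (intro sum_pos) auto
  then show ?thesis
    by (simp add: attn_coef_def flip: sum_divide_distrib)
qed

lemma attn_coef_le:
  assumes j: "1 \<le> j" "j \<le> i"
    and score: "\<And>j'. 1 \<le> j' \<Longrightarrow> j' \<le> i \<Longrightarrow>
                  sc (tok S i) (tok S j) i j \<le> sc (tok S i) (tok S j') i j' + \<delta>"
  shows "attn_coef sc S i j \<le> exp \<delta> / real i"
proof -
  let ?e = "\<lambda>j. exp (sc (tok S i) (tok S j) i j)"
  have "real i * ?e j = (\<Sum>j'=1..i. ?e j)"
    by simp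
  also have "\<dots> \<le> (\<Sum>j'=1..i. exp \<delta> * ?e j')"
  proof (rule sum_mono)
    fix j' assume "j' \<in> {1..i}"
    then have "sc (tok S i) (tok S j) i j \<le> \<delta> + sc (tok S i) (tok S j') i j'"
      using score by force
    then show "?e j \<le> exp \<delta> * ?e j'"
      by (simp flip: exp_add)
  qed
  finally have "real i * ?e j \<le> exp \<delta> * (\<Sum>j'=1..i. ?e j')"
    by (simp add: sum_distrib_left)
  moreover have "(\<Sum>j'=1..i. ?e j') > 0" "real i > 0"
    using j by (auto intro: sum_pos)
  ultimately show ?thesis
    by (simp add: attn_coef_def field_simps)
qed

lemma norm_convex_comb_diff_le:
  fixes x :: "'b \<Rightarrow> 'a::real_normed_vector"
  assumes "finite A" and "\<And>j. j \<in> A \<Longrightarrow> 0 \<le> a j" and "\<And>j. j \<in> A \<Longrightarrow> a j \<le> c"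
    and "sum a A = 1"
  shows "norm ((\<Sum>j\<in>A. a j *\<^sub>R x j) - y) \<le> c * (\<Sum>j\<in>A. norm (x j - y))"
proof -
  have "(\<Sum>j\<in>A. a j *\<^sub>R x j) - y = (\<Sum>j\<in>A. a j *\<^sub>R (x j - y))"
    using assms(4) by (simp add: scaleR_diff_right sum_subtractf flip: scaleR_sum_left)
  also have "norm \<dots> \<le> (\<Sum>j\<in>A. norm (a j *\<^sub>R (x j - y)))"
    by (rule norm_sum)
  also have "\<dots> = (\<Sum>j\<in>A. a j * norm (x j - y))"
    using assms(2) by (intro sum.cong) auto
  also have "\<dots> \<le> (\<Sum>j\<in>A. c * norm (x j - y))"
    using assms(3) by (intro sum_mono mult_right_mono) auto
  finally show ?thesis
    by (simp add: sum_distrib_left)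
qed

lemma tok_in_set: "1 \<le> j \<Longrightarrow> j \<le> length S \<Longrightarrow> tok S j \<in> set S"
  by (simp add: tok_def)

lemma tok_append_replicate_prefix:
  "1 \<le> j \<Longrightarrow> j \<le> length vs \<Longrightarrow> tok (vs @ replicate n v) j = vs ! (j - 1)"
  by (auto simp: tok_def nth_append)

lemma tok_append_replicate_suffix:
  "length vs < j \<Longrightarrow> j \<le> n + length vs \<Longrightarrow> tok (vs @ replicate n v) j = v"
  by (auto simp: tok_def nth_append)

lemma sum_norm_tok_append_replicate:
  "(\<Sum>j=1..n + length vs. norm (tok (vs @ replicate n v) j - v))
     = (\<Sum>j=1..length vs. norm (vs ! (j - 1) - v))"
proof -
  have "(\<Sum>j=1..n + length vs. norm (tok (vs @ replicate n v) j - v))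
      = (\<Sum>j=1..length vs. norm (tok (vs @ replicate n v) j - v))"
    by (rule sum.mono_neutral_right) (auto simp: tok_append_replicate_suffix)
  also have "\<dots> = (\<Sum>j=1..length vs. norm (vs ! (j - 1) - v))"
    by (rule sum.cong) (auto simp: tok_append_replicate_prefix)
  finally show ?thesis .
qed

lemma norm_attn_sum_append_replicate_le:
  fixes v :: "'a::real_normed_vector"
  assumes sc: "\<And>x y y' i j j'. x \<in> V \<Longrightarrow> y \<in> V \<Longrightarrow> y' \<in> V \<Longrightarrow>
           1 \<le> j \<Longrightarrow> j \<le> i \<Longrightarrow> 1 \<le> j' \<Longrightarrow> j' \<le> i \<Longrightarrow>
           \<bar>sc x y i j - sc x y' i j'\<bar> \<le> \<delta>"
    and "set vs \<subseteq> V" and "v \<in> V" and "1 \<le> n"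
  shows "norm (attn_sum sc (vs @ replicate n v) (n + length vs) - v)
           \<le> exp \<delta> / real (n + length vs) * (\<Sum>j=1..length vs. norm (vs ! (j - 1) - v))"
proof -
  define S where "S = vs @ replicate n v"
  define m where "m = n + length vs"
  have m: "1 \<le> m" "length S = m"
    using \<open>1 \<le> n\<close> by (auto simp: S_def m_def)
  have tokV: "tok S j \<in> V" if "1 \<le> j" "j \<le> m" for j
    using tok_in_set[of j S] that m assms(2,3) by (auto simp: S_def)
  have "attn_coef sc S m j \<le> exp \<delta> / real m" if "j \<in> {1..m}" for j
  proof (rule attn_coef_le)
    fix j' assume "1 \<le> j'" "j' \<le> m"
    moreover have "\<bar>sc (tok S m) (tok S j) m j - sc (tok S m) (tok S j') m j'\<bar> \<le> \<delta>"
      using calculation that m by (intro sc tokV) auto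
    ultimately show "sc (tok S m) (tok S j) m j \<le> sc (tok S m) (tok S j') m j' + \<delta>"
      by linarith
  qed (use that in auto)
  then have "norm ((\<Sum>j=1..m. attn_coef sc S m j *\<^sub>R tok S j) - v)
      \<le> exp \<delta> / real m * (\<Sum>j=1..m. norm (tok S j - v))"
    using m by (intro norm_convex_comb_diff_le attn_coef_nonneg sum_attn_coef) auto
  then show ?thesis
    using sum_norm_tok_append_replicate[of vs n v] by (simp add: attn_sum_def S_def m_def)
qed

lemma norm_residual_lipschitz_diff_le:
  assumes "L-lipschitz_on UNIV psi"
  shows "norm ((psi z + z) - (psi w + w)) \<le> (L + 1) * norm (z - w)"
proof -
  have "norm ((psi z + z) - (psi w + w)) \<le> norm (psi z - psi w) + norm (z - w)"
    by (metis add_diff_add norm_triangle_ineq)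
  also have "norm (psi z - psi w) \<le> L * norm (z - w)"
    using lipschitz_onD[OF assms, of z w] by (simp add: dist_norm)
  finally show ?thesis
    by (simp add: algebra_simps)
qed

lemma norm_layer_out_append_replicate_diff_le:
  assumes L: "L-lipschitz_on UNIV psi"
    and sc: "\<And>x y y' i j j'. x \<in> V \<Longrightarrow> y \<in> V \<Longrightarrow> y' \<in> V \<Longrightarrow>
           1 \<le> j \<Longrightarrow> j \<le> i \<Longrightarrow> 1 \<le> j' \<Longrightarrow> j' \<le> i \<Longrightarrow>
           \<bar>sc x y i j - sc x y' i j'\<bar> \<le> \<delta>"
    and "set vs \<subseteq> V" and "v \<in> V" and "1 \<le> n"
  shows "norm (layer_out psi sc (vs @ replicate n v) (n + length vs) - layer_out psi sc [v] 1)
           \<le> (L + 1) * (exp \<delta> / real (n + length vs) * (\<Sum>j=1..length vs. norm (vs ! (j - 1) - v)))"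
proof -
  let ?a = "attn_sum sc (vs @ replicate n v) (n + length vs)"
  have "tok (vs @ replicate n v) (n + length vs) = v"
    using \<open>1 \<le> n\<close> by (simp add: tok_append_replicate_suffix)
  then have "layer_out psi sc (vs @ replicate n v) (n + length vs) = psi (?a + v) + (?a + v)"
    by (simp add: layer_out_eq_attn_sum)
  then have "norm (layer_out psi sc (vs @ replicate n v) (n + length vs) - layer_out psi sc [v] 1)
      \<le> (L + 1) * norm ((?a + v) - (v + v))"
    using norm_residual_lipschitz_diff_le[OF L] by (simp only: layer_out_singleton)
  also have "\<dots> = (L + 1) * norm (?a - v)"
    by (simp only: add_diff_add diff_self add_0_right)
  also have "\<dots> \<le> (L + 1) * (exp \<delta> / real (n + length vs) * (\<Sum>j=1..length vs. norm (vs ! (j - 1) - v)))"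
    using norm_attn_sum_append_replicate_le[OF sc assms(3-5)] lipschitz_on_nonneg[OF L]
    by (intro mult_left_mono) auto
  finally show ?thesis .
qed

theorem lemma1:
  fixes psi :: "real^'d \<Rightarrow> real^'d"
    and sc :: "real^'d \<Rightarrow> real^'d \<Rightarrow> nat \<Rightarrow> nat \<Rightarrow> real"
    and V :: "(real^'d) set"
    and \<delta> :: real
    and vs :: "(real^'d) list"
    and v :: "real^'d"
  assumes "finite V"
    and "\<exists>L. L-lipschitz_on UNIV psi"
    and "\<And>x y y' i j j'. x \<in> V \<Longrightarrow> y \<in> V \<Longrightarrow> y' \<in> V \<Longrightarrow>
           1 \<le> j \<Longrightarrow> j \<le> i \<Longrightarrow> 1 \<le> j' \<Longrightarrow> j' \<le> i \<Longrightarrow>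
           \<bar>sc x y i j - sc x y' i j'\<bar> \<le> \<delta>"
    and "set vs \<subseteq> V"
    and "v \<in> V"
  shows "(\<lambda>n. norm (layer_out psi sc (vs @ replicate n v) (n + length vs)
                    - layer_out psi sc [v] 1)) \<longlonglongrightarrow> 0"
proof -
  obtain L where L: "L-lipschitz_on UNIV psi"
    using assms(2) by blast
  define C where "C = (\<Sum>j=1..length vs. norm (vs ! (j - 1) - v))"
  have "(\<lambda>n. 1 / real (n + length vs)) \<longlonglongrightarrow> 0"
    using LIMSEQ_ignore_initial_segment[OF lim_1_over_n, of "length vs"] by simp
  from tendsto_mult_left_zero[OF this, of "exp \<delta>"]
  have lim: "(\<lambda>n. (L + 1) * (exp \<delta> / real (n + length vs) * C)) \<longlonglongrightarrow> 0"
    by (intro tendsto_mult_left_zero tendsto_mult_right_zero) simp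
  show ?thesis
    using norm_layer_out_append_replicate_diff_le[OF L assms(3-5)] unfolding C_def [symmetric]
    by (intro Lim_null_comparison[OF _ lim] eventually_sequentiallyI[of 1]) simp
qed

end
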